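(* $$\sigma(3,1)+\sigma(2,2)=3\lambda(4)=\frac{\pi^4}{32}.$$
   Context: For integers $t\geq 1$, $n\geq 1$ let $S_n^{(t)}=\sum_{k=1}^{n}\frac{1}{(2k-1)^t}$, and for integers $s\geq 2$, $t\geq 1$ let $\sigma(s,t)=\sum_{n\geq 1}\frac{S_n^{(t)}}{n^s}$. For real $s>1$, $\lambda(s)=\sum_{n\geq 1}\frac{1}{(2n-1)^s}$. *)

theory Defs
  imports "HOL-Analysis.Analysis"
begin

definition Sodd :: "nat \<Rightarrow> nat \<Rightarrow> real" where
  "Sodd t n = (\<Sum>k=1..n. 1 / (2 * real k - 1) ^ t)"

definition sigma :: "nat \<Rightarrow> nat \<Rightarrow> real" where
  "sigma s t = (\<Sum>n. Sodd t (n + 1) / real (n + 1) ^ s)"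

definition lambda :: "real \<Rightarrow> real" where
  "lambda s = (\<Sum>n. 1 / (2 * real n + 1) powr s)"

end

theory Submission
  imports Defs
begin

(*
  With K(a, b) = 8/(a(a+b)^3) + 4/(a^2(a+b)^2) one has K(a, b) + K(b, a) = 4/(a^2 b^2), so the
  double series of K over odd a = 2k+1, b = 2i+1 is 2 lambda(2)^2 = pi^4/32. On the antidiagonal
  k + i = n we have a + b = 2(n+1), and the sum of K there is S_{n+1}^(1)/(n+1)^3 + S_{n+1}^(2)/(n+1)^2;
  regrouping the double series by antidiagonals therefore gives sigma(3,1) + sigma(2,2).

  The identity 3 lambda(4) = pi^4/32 amounts to zeta(4) = pi^4/90, which follows from
  zeta(2)^2 = zeta(4) + 2 sum_{m<n} 1/(m^2 n^2). Writing 1/(m^2 n^2) = (1/m^2 - 1/n^2)/(n^2 - m^2),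
  the sums of 1/(n^2 - m^2) over n > m and over m < n are H_{2m}/(2m) and H_{2n}/(2n) - 3/(4n^2)
  (by telescoping and by partial fractions), so the off-diagonal sum is 3 zeta(4)/4.
*)

lemma has_sum_diff:
  fixes f g :: "'a \<Rightarrow> 'b::topological_ab_group_add"
  assumes "(f has_sum a) A" and "(g has_sum b) A"
  shows "((\<lambda>x. f x - g x) has_sum (a - b)) A"
proof -
  have "((\<lambda>x. - g x) has_sum (- b)) A"
    using assms(2) by (simp add: has_sum_uminus)
  from has_sum_add[OF assms(1) this] show ?thesis
    by simp
qed

lemma has_sum_mult_nonneg:
  fixes f g :: "_ \<Rightarrow> real"
  assumes f: "(f has_sum a) A" and g: "(g has_sum b) B"
    and f_nonneg: "\<And>x. x \<in> A \<Longrightarrow> 0 \<le> f x" and g_nonneg: "\<And>y. y \<in> B \<Longrightarrow> 0 \<le> g y"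
  shows "((\<lambda>(x, y). f x * g y) has_sum (a * b)) (A \<times> B)"
proof -
  have rows: "((\<lambda>y. (\<lambda>(x, y). f x * g y) (x, y)) has_sum (f x * b)) B" for x
    using has_sum_cmult_right[OF g] by simp
  have cols: "((\<lambda>x. f x * b) has_sum (a * b)) A"
    using has_sum_cmult_left[OF f] .
  have "(\<lambda>(x, y). f x * g y) summable_on A \<times> B"
    by (rule summable_on_SigmaI[OF rows has_sum_imp_summable[OF cols]])
      (simp add: f_nonneg g_nonneg)
  then show ?thesis
    using has_sum_SigmaI[OF rows cols] by simp
qed

lemma has_sum_of_symmetrization:
  fixes f :: "'a \<times> 'a \<Rightarrow> real"
  assumes nonneg: "\<And>x y. x \<in> A \<Longrightarrow> y \<in> A \<Longrightarrow> 0 \<le> f (x, y)"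
    and sym: "((\<lambda>(x, y). f (x, y) + f (y, x)) has_sum S) (A \<times> A)"
  shows "(f has_sum (S / 2)) (A \<times> A)"
proof -
  have "f (x, y) \<le> f (x, y) + f (y, x)" if "x \<in> A" "y \<in> A" for x y
    using nonneg[OF that(2,1)] by simp
  then have "f summable_on A \<times> A"
    by (intro summable_on_comparison_test[OF has_sum_imp_summable[OF sym]]) (auto simp: nonneg)
  then obtain X where X: "(f has_sum X) (A \<times> A)"
    by (auto simp: summable_on_def)
  have "((\<lambda>(x, y). f (y, x)) has_sum X) (A \<times> A)"
    using has_sum_swap[THEN iffD1, OF X] .
  from has_sum_add[OF X this] have "((\<lambda>(x, y). f (x, y) + f (y, x)) has_sum (X + X)) (A \<times> A)"
    by (simp add: case_prod_unfold)
  with sym have "S = X + X"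
    using has_sum_unique by blast
  with X show ?thesis by simp
qed

lemma sums_antidiagonals:
  fixes f :: "nat \<times> nat \<Rightarrow> 'a::{topological_comm_monoid_add, t3_space}"
  assumes "(f has_sum S) UNIV"
  shows "(\<lambda>n. \<Sum>k\<le>n. f (k, n - k)) sums S"
proof -
  have "((\<lambda>(n, k). f (k, n - k)) has_sum S) (SIGMA n:UNIV. {..n})"
    using assms by (subst has_sum_reindex_bij_witness[where j = "\<lambda>(n, k). (k, n - k)"
          and i = "\<lambda>(k, i). (k + i, k)" and T = UNIV and h = f]) auto
  then have "((\<lambda>n. \<Sum>k\<le>n. f (k, n - k)) has_sum S) UNIV"
    by (rule has_sum_SigmaD) auto
  then show ?thesis
    by (rule has_sum_imp_sums)
qed

lemma has_sum_even_indices: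
  fixes f :: "nat \<Rightarrow> 'a::banach"
  assumes all: "(f has_sum S) UNIV" and odd: "((\<lambda>n. f (2 * n + 1)) has_sum T) UNIV"
  shows "((\<lambda>n. f (2 * n)) has_sum (S - T)) UNIV"
proof -
  have inj_odd: "inj (\<lambda>n::nat. 2 * n + 1)" and inj_even: "inj (\<lambda>n::nat. 2 * n)"
    by (auto simp: inj_on_def)
  have odds: "(f has_sum T) (range (\<lambda>n. 2 * n + 1))"
    using has_sum_reindex[OF inj_odd, of f T] odd by (simp only: o_def)
  obtain E where evens: "(f has_sum E) (range (\<lambda>n. 2 * n))"
    using summable_on_subset_banach[OF has_sum_imp_summable[OF all]]
    by (auto simp: summable_on_def)
  have cover: "range (\<lambda>n. 2 * n) \<union> range (\<lambda>n. 2 * n + 1) = (UNIV :: nat set)"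
    by (auto simp: image_iff) presburger
  have disjoint: "range (\<lambda>n::nat. 2 * n) \<inter> range (\<lambda>n. 2 * n + 1) = {}"
    by (auto simp: image_iff) presburger
  have "(f has_sum (E + T)) UNIV"
    using has_sum_Un_disjoint[OF evens odds disjoint] unfolding cover .
  with all have "E = S - T"
    using has_sum_unique by (simp add: eq_diff_eq)
  with evens show ?thesis
    using has_sum_reindex[OF inj_even, of f "S - T"] by (simp only: o_def)
qed

lemma sums_telescope_shift:
  fixes a :: "nat \<Rightarrow> 'a::real_normed_vector"
  assumes "a \<longlonglongrightarrow> 0"
  shows "(\<lambda>d. a d - a (d + k)) sums (\<Sum>d<k. a d)"
proof (induction k)
  case 0
  then show ?case by simp
next
  case (Suc k)
  have "(\<lambda>d. a (d + k) - a (Suc d + k)) sums a k"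
    using telescope_sums'[OF LIMSEQ_ignore_initial_segment[OF assms, of k]] by simp
  from sums_add[OF Suc this] show ?case
    by (simp add: algebra_simps)
qed

lemma harm_le_real: "harm n \<le> real n"
  unfolding harm_altdef by (rule order_trans[OF sum_mono[where g = "\<lambda>_. 1"]]) (auto simp: field_simps)

lemma harm_add: "harm (a + n) = harm a + (\<Sum>m<n. 1 / (real a + real m + 1) :: real)"
  by (induction n) (auto simp: harm_Suc field_simps)

definition inv_sq_diff :: "nat \<Rightarrow> nat \<Rightarrow> real" where
  "inv_sq_diff m n = 1 / ((real n + 1)\<^sup>2 - (real m + 1)\<^sup>2)"

lemma inv_sq_diff_pos: "m < n \<Longrightarrow> 0 < inv_sq_diff m n"
  unfolding inv_sq_diff_def by (auto intro!: power_strict_mono)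

lemma inv_sq_diff_row_has_sum:
  "((\<lambda>n. inv_sq_diff m n) has_sum (harm (2 * m + 2) / (2 * (real m + 1)))) {m<..}"
proof -
  let ?a = "\<lambda>d::nat. 1 / (real d + 1)"
  have "?a \<longlonglongrightarrow> 0"
    using LIMSEQ_inverse_real_of_nat by (simp add: inverse_eq_divide add.commute)
  from sums_mult[OF sums_telescope_shift[OF this, of "2 * m + 2"], of "1 / (2 * (real m + 1))"]
  have "(\<lambda>d. 1 / (2 * (real m + 1)) * (?a d - ?a (d + (2 * m + 2))))
          sums (harm (2 * m + 2) / (2 * (real m + 1)))"
    by (simp add: harm_altdef inverse_eq_divide add.commute)
  moreover have "1 / (2 * (real m + 1)) * (?a d - ?a (d + (2 * m + 2))) = inv_sq_diff m (m + 1 + d)" for d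
    unfolding inv_sq_diff_def by (simp add: field_simps power2_eq_square)
  ultimately have "((\<lambda>d. inv_sq_diff m (m + 1 + d)) has_sum (harm (2 * m + 2) / (2 * (real m + 1)))) UNIV"
    by (intro sums_nonneg_imp_has_sum) (auto intro!: less_imp_le inv_sq_diff_pos)
  then show ?thesis
    by (subst has_sum_reindex_bij_witness[where j = "\<lambda>n. n - (m + 1)" and i = "\<lambda>d. m + 1 + d"
          and T = UNIV and h = "\<lambda>d. inv_sq_diff m (m + 1 + d)"]) auto
qed

lemma inv_sq_diff_column_sum:
  "(\<Sum>m<n. inv_sq_diff m n) = harm (2 * n + 2) / (2 * (real n + 1)) - 3 / (4 * (real n + 1)\<^sup>2)"
proof -
  have partial_fractions: "inv_sq_diff m n = (1 / (real n - real m) + 1 / (real n + real m + 2)) / (2 * (real n + 1))"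
    if "m < n" for m
  proof -
    have "(real n + 1)\<^sup>2 - (real m + 1)\<^sup>2 = (real n - real m) * (real n + real m + 2)"
      by (simp add: algebra_simps power2_eq_square)
    moreover have "1 / (real n - real m) + 1 / (real n + real m + 2)
        = 2 * (real n + 1) / ((real n - real m) * (real n + real m + 2))"
      using that by (simp add: field_simps)
    ultimately show ?thesis
      unfolding inv_sq_diff_def by simp
  qed
  have reversed: "(\<Sum>m<n. 1 / (real n - real m)) = harm n"
    unfolding harm_altdef
    by (subst sum.nat_diff_reindex[symmetric]) (auto intro!: sum.cong simp: of_nat_diff inverse_eq_divide)
  have shifted: "(\<Sum>m<n. 1 / (real n + real m + 2)) = harm (2 * n + 1) - harm (n + 1)"
    using harm_add[of "n + 1" n] by (simp add: mult_2 add_ac)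
  have harm_n1: "harm (n + 1) = harm n + 1 / (real n + 1)"
    using harm_Suc[of n, where 'a = real] by (simp add: inverse_eq_divide add_ac)
  have harm_2n2: "harm (2 * n + 2) = harm (2 * n + 1) + 1 / (2 * (real n + 1))"
    using harm_Suc[of "2 * n + 1", where 'a = real] by (simp add: inverse_eq_divide add_ac)
  have numerator: "harm n + (harm (2 * n + 1) - harm (n + 1)) = harm (2 * n + 2) - 3 / (2 * (real n + 1))"
    unfolding harm_n1 harm_2n2 by (simp add: diff_divide_distrib[symmetric] field_simps)
  have "(\<Sum>m<n. inv_sq_diff m n)
      = ((\<Sum>m<n. 1 / (real n - real m)) + (\<Sum>m<n. 1 / (real n + real m + 2))) / (2 * (real n + 1))"
    by (simp add: partial_fractions sum.distrib flip: sum_divide_distrib)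
  also have "\<dots> = (harm (2 * n + 2) - 3 / (2 * (real n + 1))) / (2 * (real n + 1))"
    unfolding reversed shifted numerator ..
  finally show ?thesis
    by (simp add: diff_divide_distrib power2_eq_square algebra_simps)
qed

lemma zeta2_has_sum: "((\<lambda>n. 1 / (real n + 1)\<^sup>2) has_sum (pi\<^sup>2 / 6)) UNIV"
  by (rule sums_nonneg_imp_has_sum) (use inverse_squares_sums in \<open>simp_all add: add.commute\<close>)

lemma harm_average_le_1: "harm (2 * n + 2) / (2 * (real n + 1)) \<le> 1"
  using harm_le_real[of "2 * n + 2"] by simp

lemma inv_sq_diff_split:
  assumes "m < n"
  shows "inv_sq_diff m n / (real m + 1)\<^sup>2 - inv_sq_diff m n / (real n + 1)\<^sup>2
    = 1 / (real m + 1)\<^sup>2 * (1 / (real n + 1)\<^sup>2)"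
proof -
  define a b where "a = (real m + 1)\<^sup>2" and "b = (real n + 1)\<^sup>2"
  have "0 < a" "a < b"
    using assms unfolding a_def b_def by (auto intro: power_strict_mono)
  then have gap: "1 / a - 1 / b = (b - a) / (a * b)" "b - a \<noteq> 0"
    by (simp_all add: field_simps)
  have "1 / (b - a) / a - 1 / (b - a) / b = 1 / (b - a) * (1 / a - 1 / b)"
    by (simp add: right_diff_distrib)
  also have "\<dots> = 1 / a * (1 / b)"
    using gap by simp
  finally have "1 / (b - a) / a - 1 / (b - a) / b = 1 / a * (1 / b)" .
  then show ?thesis
    unfolding inv_sq_diff_def a_def b_def .
qed

lemma zeta2_square_upper_has_sum:
  assumes zeta4: "((\<lambda>n. 1 / (real n + 1) ^ 4) has_sum z) UNIV"
  shows "((\<lambda>(m, n). 1 / (real m + 1)\<^sup>2 * (1 / (real n + 1)\<^sup>2)) has_sum (3 / 4 * z)) {(m, n). m < n}"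
proof -
  have upper_triangle: "{(m, n). m < n} = (SIGMA m:UNIV. {m<..})"
    by auto
  define r where "r n = harm (2 * n + 2) / (2 * (real n + 1))" for n
  have r_nonneg: "0 \<le> r n" for n
    unfolding r_def by (simp add: harm_nonneg)
  have "r n / (real n + 1)\<^sup>2 \<le> 1 / (real n + 1)\<^sup>2" for n
    using harm_average_le_1[of n] unfolding r_def by (intro divide_right_mono) auto
  then have "(\<lambda>n. r n / (real n + 1)\<^sup>2) summable_on UNIV"
    using r_nonneg by (intro summable_on_comparison_test[OF has_sum_imp_summable[OF zeta2_has_sum]]) auto
  then obtain R where R: "((\<lambda>n. r n / (real n + 1)\<^sup>2) has_sum R) UNIV"
    by (auto simp: summable_on_def)
  have w_nonneg: "m < n \<Longrightarrow> 0 \<le> inv_sq_diff m n" for m n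
    using inv_sq_diff_pos by (simp add: less_imp_le)
  have row: "((\<lambda>n. inv_sq_diff m n / (real m + 1)\<^sup>2) has_sum (r m / (real m + 1)\<^sup>2)) {m<..}" for m
    using has_sum_cmult_left[OF inv_sq_diff_row_has_sum[of m], of "1 / (real m + 1)\<^sup>2"]
    by (simp add: r_def)
  have rows: "((\<lambda>(m, n). inv_sq_diff m n / (real m + 1)\<^sup>2) has_sum R) (SIGMA m:UNIV. {m<..})"
    by (rule has_sum_SigmaI[OF _ R summable_on_SigmaI[OF _ has_sum_imp_summable[OF R]]])
      (use row w_nonneg in auto)
  define c where "c n = r n / (real n + 1)\<^sup>2 - 3 / 4 * (1 / (real n + 1) ^ 4)" for n
  have C: "(c has_sum (R - 3 / 4 * z)) UNIV"
    unfolding c_def by (intro has_sum_diff R has_sum_cmult_right zeta4)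
  have column: "((\<lambda>m. inv_sq_diff m n / (real n + 1)\<^sup>2) has_sum c n) {..<n}" for n
  proof -
    have "(\<Sum>m<n. inv_sq_diff m n / (real n + 1)\<^sup>2) = c n"
      unfolding c_def r_def sum_divide_distrib[symmetric] inv_sq_diff_column_sum
      by (simp add: diff_divide_distrib power2_eq_square power4_eq_xxxx)
    then show ?thesis
      by (simp add: has_sum_finiteI)
  qed
  have "((\<lambda>(n, m). inv_sq_diff m n / (real n + 1)\<^sup>2) has_sum (R - 3 / 4 * z)) (SIGMA n:UNIV. {..<n})"
    by (rule has_sum_SigmaI[OF _ C summable_on_SigmaI[OF _ has_sum_imp_summable[OF C]]])
      (use column w_nonneg in auto)
  then have cols: "((\<lambda>(m, n). inv_sq_diff m n / (real n + 1)\<^sup>2) has_sum (R - 3 / 4 * z)) (SIGMA m:UNIV. {m<..})"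
    by (subst (asm) has_sum_reindex_bij_witness[where j = prod.swap and i = prod.swap
          and T = "SIGMA m:UNIV. {m<..}"]) auto
  have "((\<lambda>(m, n). 1 / (real m + 1)\<^sup>2 * (1 / (real n + 1)\<^sup>2)) has_sum (R - (R - 3 / 4 * z)))
      (SIGMA m:UNIV. {m<..})"
    using has_sum_diff[OF rows cols]
    by (rule has_sum_cong[THEN iffD1, rotated]) (auto simp: inv_sq_diff_split)
  then show ?thesis
    unfolding upper_triangle by simp
qed

lemma zeta4_has_sum: "((\<lambda>n. 1 / (real n + 1) ^ 4) has_sum (pi ^ 4 / 90)) UNIV"
proof -
  have "1 / (real n + 1) ^ 4 \<le> 1 / (real n + 1)\<^sup>2" for n
    by (intro divide_left_mono power_increasing) auto
  then have "(\<lambda>n. 1 / (real n + 1) ^ 4) summable_on UNIV"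
    by (intro summable_on_comparison_test[OF has_sum_imp_summable[OF zeta2_has_sum]]) auto
  then obtain z where z: "((\<lambda>n. 1 / (real n + 1) ^ 4) has_sum z) UNIV"
    by (auto simp: summable_on_def)
  define P where "P = (\<lambda>(m, n). 1 / (real m + 1)\<^sup>2 * (1 / (real n + 1)\<^sup>2))"
  have upper: "(P has_sum (3 / 4 * z)) {(m, n). m < n}"
    unfolding P_def by (rule zeta2_square_upper_has_sum[OF z])
  have lower: "(P has_sum (3 / 4 * z)) {(m, n). n < m}"
    using upper unfolding P_def
    by (subst (asm) has_sum_reindex_bij_witness[where j = prod.swap and i = prod.swap
          and T = "{(m, n). n < m}"]) auto
  have "((P \<circ> (\<lambda>m. (m, m))) has_sum z) UNIV"
    using z by (rule has_sum_cong[THEN iffD1, rotated]) (simp add: P_def power2_eq_square power4_eq_xxxx)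
  then have diagonal: "(P has_sum z) (range (\<lambda>m. (m, m)))"
    by (subst has_sum_reindex) (auto simp: inj_on_def)
  have "(P has_sum (3 / 4 * z + (3 / 4 * z + z))) ({(m, n). m < n} \<union> ({(m, n). n < m} \<union> range (\<lambda>m. (m, m))))"
    by (intro has_sum_Un_disjoint upper lower diagonal) auto
  moreover have "{(m, n). m < n} \<union> ({(m, n). n < m} \<union> range (\<lambda>m. (m, m))) = (UNIV :: (nat \<times> nat) set)"
    by auto
  moreover have "(P has_sum (pi\<^sup>2 / 6 * (pi\<^sup>2 / 6))) UNIV"
    using has_sum_mult_nonneg[OF zeta2_has_sum zeta2_has_sum] unfolding P_def by simp
  ultimately have "pi\<^sup>2 / 6 * (pi\<^sup>2 / 6) = 3 / 4 * z + (3 / 4 * z + z)"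
    using has_sum_unique by metis
  then have "z = pi ^ 4 / 90"
    by (simp add: field_simps power4_eq_xxxx power2_eq_square)
  with z show ?thesis
    by simp
qed

lemma has_sum_odd_reciprocal_powers:
  assumes "((\<lambda>n. 1 / (real n + 1) ^ p) has_sum Z) UNIV"
  shows "((\<lambda>n. 1 / (2 * real n + 1) ^ p) has_sum (Z - Z / 2 ^ p)) UNIV"
proof -
  have "((\<lambda>n. 1 / (real (2 * n + 1) + 1) ^ p) has_sum (Z / 2 ^ p)) UNIV"
    using has_sum_cmult_left[OF assms, of "1 / 2 ^ p"]
    by (simp add: power_mult_distrib[symmetric] algebra_simps)
  from has_sum_even_indices[OF assms this] show ?thesis
    by simp
qed

lemma lambda2_has_sum: "((\<lambda>n. 1 / (2 * real n + 1)\<^sup>2) has_sum (pi\<^sup>2 / 8)) UNIV"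
  using has_sum_odd_reciprocal_powers[OF zeta2_has_sum] by simp

lemma lambda4_eq: "lambda 4 = pi ^ 4 / 96"
proof -
  have "(\<lambda>n. 1 / (2 * real n + 1) ^ 4) sums (pi ^ 4 / 96)"
    using has_sum_imp_sums[OF has_sum_odd_reciprocal_powers[OF zeta4_has_sum]] by simp
  then show ?thesis
    unfolding lambda_def by (simp add: powr_numeral sums_iff)
qed

definition sigma_kernel :: "real \<Rightarrow> real \<Rightarrow> real" where
  "sigma_kernel a b = 8 / (a * (a + b) ^ 3) + 4 / (a\<^sup>2 * (a + b)\<^sup>2)"

lemma sigma_kernel_add_swap:
  assumes "0 < a" "0 < b"
  shows "sigma_kernel a b + sigma_kernel b a = 4 / (a\<^sup>2 * b\<^sup>2)"
proof -
  have "0 < a + b"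
    using assms by simp
  then show ?thesis
    using assms unfolding sigma_kernel_def by (simp add: field_simps add.commute[of b a]) algebra
qed

lemma sigma_kernel_nonneg: "0 < a \<Longrightarrow> 0 < b \<Longrightarrow> 0 \<le> sigma_kernel a b"
  unfolding sigma_kernel_def by simp

lemma sigma_kernel_odd_has_sum:
  "((\<lambda>(k, i). sigma_kernel (2 * real k + 1) (2 * real i + 1)) has_sum (pi ^ 4 / 32)) UNIV"
proof -
  define K where "K = (\<lambda>(k, i). sigma_kernel (2 * real k + 1) (2 * real i + 1))"
  have "((\<lambda>(k, i). 1 / (2 * real k + 1)\<^sup>2 * (1 / (2 * real i + 1)\<^sup>2)) has_sum (pi\<^sup>2 / 8 * (pi\<^sup>2 / 8)))
      (UNIV \<times> UNIV)"
    by (rule has_sum_mult_nonneg[OF lambda2_has_sum lambda2_has_sum]) auto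
  from has_sum_cmult_right[OF this, of 4]
  have "((\<lambda>(k, i). K (k, i) + K (i, k)) has_sum (4 * (pi\<^sup>2 / 8 * (pi\<^sup>2 / 8)))) (UNIV \<times> UNIV)"
    by (rule has_sum_cong[THEN iffD1, rotated]) (auto simp: K_def sigma_kernel_add_swap)
  from has_sum_of_symmetrization[OF _ this] have "(K has_sum (4 * (pi\<^sup>2 / 8 * (pi\<^sup>2 / 8)) / 2)) UNIV"
    by (simp add: K_def sigma_kernel_nonneg)
  moreover have "4 * (pi\<^sup>2 / 8 * (pi\<^sup>2 / 8)) / 2 = pi ^ 4 / 32"
    by (simp add: power2_eq_square power4_eq_xxxx)
  ultimately show ?thesis
    by (simp add: K_def)
qed

lemma Sodd_Suc_eq: "Sodd t (Suc n) = (\<Sum>k\<le>n. 1 / (2 * real k + 1) ^ t)"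
proof -
  have "Sodd t (Suc n) = (\<Sum>k<Suc n. 1 / (2 * real (Suc k) - 1) ^ t)"
    unfolding Sodd_def One_nat_def by (rule sum.atLeast1_atMost_eq)
  then show ?thesis
    unfolding lessThan_Suc_atMost by (simp add: algebra_simps)
qed

lemma Sodd_nonneg: "0 \<le> Sodd t n"
  unfolding Sodd_def by (intro sum_nonneg) auto

lemma sigma_kernel_antidiagonal_sum:
  "(\<Sum>k\<le>n. sigma_kernel (2 * real k + 1) (2 * real (n - k) + 1))
    = Sodd 1 (Suc n) / real (Suc n) ^ 3 + Sodd 2 (Suc n) / real (Suc n) ^ 2"
proof -
  have "sigma_kernel (2 * real k + 1) (2 * real (n - k) + 1)
      = 1 / (2 * real k + 1) ^ 1 / real (Suc n) ^ 3 + 1 / (2 * real k + 1) ^ 2 / real (Suc n) ^ 2"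
    if "k \<le> n" for k
  proof -
    have sum_eq: "(2 * real k + 1) + (2 * real (n - k) + 1) = 2 * real (Suc n)"
      using that by (simp add: of_nat_diff)
    show ?thesis
      unfolding sigma_kernel_def sum_eq power_mult_distrib by simp
  qed
  then show ?thesis
    by (simp add: Sodd_Suc_eq sum_divide_distrib sum.distrib)
qed

theorem mainTheorem16:
  shows "sigma 3 1 + sigma 2 2 = 3 * lambda 4 \<and> 3 * lambda 4 = pi ^ 4 / 32"
proof -
  define a where "a n = Sodd 1 (Suc n) / real (Suc n) ^ 3" for n
  define b where "b n = Sodd 2 (Suc n) / real (Suc n) ^ 2" for n
  have a_nonneg: "0 \<le> a n" and b_nonneg: "0 \<le> b n" for n
    unfolding a_def b_def by (simp_all add: Sodd_nonneg)
  have ab: "(\<lambda>n. a n + b n) sums (pi ^ 4 / 32)"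
    unfolding a_def b_def sigma_kernel_antidiagonal_sum[symmetric]
    using sums_antidiagonals[OF sigma_kernel_odd_has_sum] by simp
  have "summable a" "summable b"
    using a_nonneg b_nonneg
    by (auto intro!: summable_comparison_test[OF _ sums_summable[OF ab]])
  then have "sigma 3 1 + sigma 2 2 = (\<Sum>n. a n + b n)"
    unfolding sigma_def a_def b_def by (simp add: suminf_add)
  also have "\<dots> = pi ^ 4 / 32"
    using ab by (rule sums_unique[symmetric])
  finally show ?thesis
    by (simp add: lambda4_eq)
qed

end
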